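(* Let $n\ge2$ and define $\psi:\mathcal K_0^n\times[0,1]\to\mathcal K_0^n$ by $\psi(A,0)=A$ and $\psi(A,t)=(A+t\mathbb B)\cap\frac{1-t}{t}\mathbb B$ for $t\in(0,1]$. Then $\psi$ is continuous with respect to $d_{AW}$, and for every $t\in[\frac{\sqrt5-1}{2},1)$ and every $A\in\mathcal K_0^n$ one has $\psi(A,t)=\frac{1-t}{t}\mathbb B$.
   Context: $\mathbb B$ is the closed Euclidean unit ball of $\mathbb R^n$. $\mathcal K_0^n$ is the family of closed convex subsets of $\mathbb R^n$ containing $0$, with the Attouch–Wets metric $d_{AW}(A,K)=\sup_{j\in\mathbb N}\min\{\frac1j,\sup_{\|x\|<j}|d(x,A)-d(x,K)|\}$, $d(x,A)=\inf_{a\in A}\|x-a\|$. *)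

theory Defs
  imports "HOL-Analysis.Analysis"
begin

definition K0 :: "('a::euclidean_space) set set" where
  "K0 = {A. closed A \<and> convex A \<and> 0 \<in> A}"

definition dAW :: "('a::euclidean_space) set \<Rightarrow> 'a set \<Rightarrow> real" where
  "dAW A K = (SUP j\<in>{1::nat..}. min (1 / real j)
                 (SUP x\<in>ball 0 (real j). \<bar>infdist x A - infdist x K\<bar>))"

definition psi :: "('a::euclidean_space) set \<Rightarrow> real \<Rightarrow> 'a set" where
  "psi A t = (if t = 0 then A
              else {a + b | a b. a \<in> A \<and> b \<in> cball 0 t} \<inter> cball 0 ((1 - t) / t))"

end

theory Submission
  imports Defs
begin

text \<open>
  On bounded regions the Attouch--Wets distance is controlled, in both
  directions, by how far the points of one set in a large ball are from the other set.
  Replacing \<open>A + t\<bbbB>\<close> by \<open>A' + t'\<bbbB>\<close> moves points by at most the distance from A to A'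
  plus \<open>|t - t'|\<close>, and the radial retraction onto the ball of radius \<open>r'\<close>, which stays inside
  a convex set containing 0, moves a point by at most its excess norm over \<open>r'\<close>. This gives
  continuity for t > 0; at t = 0 the cut-off radius tends to infinity and only the sum matters.
  Finally \<open>t \<ge> (\<surd>5 - 1)/2\<close> means \<open>t\<^sup>2 + t \<ge> 1\<close>, i.e. \<open>(1 - t)/t \<le> t\<close>, so the cut-off ball
  lies inside \<open>A + t\<bbbB>\<close> because 0 \<in> A.
\<close>

lemma psi_eq:
  fixes A :: "'a::euclidean_space set"
  assumes "t \<noteq> 0"
  shows "psi A t = (A + cball 0 t) \<inter> cball 0 ((1 - t) / t)"
  unfolding psi_def if_not_P[OF assms] set_plus_def by blast

lemma psi_0 [simp]: "psi A 0 = A"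
  by (simp add: psi_def)

lemma psi_subset_plus_cball:
  fixes A :: "'a::euclidean_space set"
  assumes "0 \<le> t"
  shows "psi A t \<subseteq> A + cball 0 t"
proof (cases "t = 0")
  case True
  then show ?thesis by simp
next
  case False
  then show ?thesis by (simp add: psi_eq)
qed

lemma inter_cball_subset_psi:
  fixes A :: "'a::euclidean_space set"
  assumes "0 \<le> t" "t * (R + 1) \<le> 1"
  shows "A \<inter> cball 0 R \<subseteq> psi A t"
proof (cases "t = 0")
  case True
  then show ?thesis by simp
next
  case False
  then have "R \<le> (1 - t) / t"
    using assms by (simp add: field_simps)
  moreover have "A \<subseteq> A + cball 0 t"
    using set_zero_plus2[of "cball 0 t" A] assms(1) by (simp add: add.commute)
  ultimately show ?thesis
    using False by (auto simp: psi_eq)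
qed

lemma closed_plus_cball:
  fixes A :: "'a::euclidean_space set"
  assumes "closed A"
  shows "closed (A + cball 0 t)"
proof -
  have "A + cball 0 t = (\<Union>x\<in>A. \<Union>y\<in>cball 0 t. {x + y})"
    by (auto simp: set_plus_def)
  then show ?thesis
    using closed_compact_sums[OF assms compact_cball] by simp
qed

lemma psi_in_K0:
  assumes "A \<in> K0" "t \<in> {0..1}"
  shows "psi A t \<in> K0"
proof (cases "t = 0")
  case True
  then show ?thesis using assms by simp
next
  case False
  have A: "closed A" "convex A" "0 \<in> A"
    using assms(1) by (auto simp: K0_def)
  have "0 \<in> A + cball 0 t"
    using A(3) assms(2) set_plus_intro[of 0 A 0 "cball 0 t"] by simp
  moreover have "0 \<le> (1 - t) / t"
    using assms(2) by simp
  ultimately show ?thesis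
    using False A unfolding K0_def psi_eq[OF False]
    by (auto intro!: closed_Int convex_Int closed_plus_cball convex_set_plus)
qed

lemma psi_eq_cball:
  fixes A :: "'a::euclidean_space set"
  assumes "0 \<in> A" "(sqrt 5 - 1) / 2 \<le> t" "t < 1"
  shows "psi A t = cball 0 ((1 - t) / t)"
proof -
  have "0 < (sqrt 5 - 1) / 2"
    by (simp add: real_less_rsqrt)
  then have t: "0 < t"
    using assms(2) by linarith
  have "sqrt 5 \<le> 2 * t + 1"
    using assms(2) by (simp add: divide_le_eq)
  then have "(sqrt 5)\<^sup>2 \<le> (2 * t + 1)\<^sup>2"
    by (rule power_mono) simp
  then have "1 - t \<le> t * t"
    by (simp add: power2_eq_square algebra_simps)
  then have "(1 - t) / t \<le> t"
    using t by (simp add: divide_le_eq)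
  then have "cball 0 ((1 - t) / t) \<subseteq> cball 0 t"
    by (rule subset_cball)
  also have "\<dots> \<subseteq> A + cball 0 t"
    using assms(1) by (rule set_zero_plus2)
  finally show ?thesis
    using t by (auto simp: psi_eq)
qed

subsection \<open>Local closeness of sets\<close>

definition locally_close :: "real \<Rightarrow> real \<Rightarrow> 'a::real_normed_vector set \<Rightarrow> 'a set \<Rightarrow> bool" where
  "locally_close R \<delta> A B \<longleftrightarrow> (\<forall>a\<in>A. norm a < R \<longrightarrow> (\<exists>b\<in>B. dist a b \<le> \<delta>))"

lemma locally_close_mono:
  assumes "locally_close R \<delta> A B" "R' \<le> R" "\<delta> \<le> \<delta>'" "A' \<subseteq> A" "B \<subseteq> B'"
  shows "locally_close R' \<delta>' A' B'"
  using assms unfolding locally_close_def by (meson less_le_trans order_trans subsetD)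

lemma locally_close_inter_cball_large:
  assumes "locally_close R \<delta> A B"
  shows "locally_close R \<delta> A (B \<inter> cball 0 (R + \<delta>))"
  unfolding locally_close_def
proof (intro ballI impI)
  fix a assume "a \<in> A" "norm a < R"
  with assms obtain b where b: "b \<in> B" "dist a b \<le> \<delta>"
    unfolding locally_close_def by blast
  have "norm b \<le> norm a + dist a b"
    by (metis dist_0_norm dist_commute dist_triangle)
  with \<open>norm a < R\<close> b show "\<exists>b\<in>B \<inter> cball 0 (R + \<delta>). dist a b \<le> \<delta>"
    by (intro bexI[of _ b]) auto
qed

text \<open>Radial retraction onto the ball of radius r, which preserves a convex set containing 0.\<close>
lemma convex_inter_cball_near:
  fixes C :: "'a::real_normed_vector set"
  assumes "convex C" "0 \<in> C" "y \<in> C" "0 \<le> r"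
  obtains z where "z \<in> C \<inter> cball 0 r" "dist y z \<le> max 0 (norm y - r)"
proof (cases "norm y \<le> r")
  case True
  then show ?thesis using that assms(3) by simp
next
  case False
  define l where "l = r / norm y"
  have "0 < norm y"
    using False assms(4) by linarith
  have l: "0 \<le> l" "l \<le> 1"
    using False assms(4) by (auto simp: l_def divide_le_eq)
  have "l *\<^sub>R y \<in> C"
    using convexD[OF assms(1,3,2), of l "1 - l"] l by simp
  moreover have "norm (l *\<^sub>R y) = r"
  proof -
    have "norm (l *\<^sub>R y) = l * norm y"
      using l(1) by simp
    also have "\<dots> = r"
      using \<open>0 < norm y\<close> by (simp add: l_def)
    finally show ?thesis .
  qed
  moreover have "dist y (l *\<^sub>R y) = norm y - r"
  proof -
    have "y - l *\<^sub>R y = (1 - l) *\<^sub>R y"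
      by (simp add: scaleR_diff_left)
    then have "dist y (l *\<^sub>R y) = (1 - l) * norm y"
      using l by (simp add: dist_norm)
    then show ?thesis
      using \<open>0 < norm y\<close> by (simp add: l_def left_diff_distrib)
  qed
  ultimately show ?thesis
    using that[of "l *\<^sub>R y"] by simp
qed

lemma locally_close_plus_cball:
  fixes A B :: "'a::real_normed_vector set"
  assumes "locally_close R \<delta> A B" "0 \<le> s'"
  shows "locally_close (R - s) (\<delta> + \<bar>s - s'\<bar>) (A + cball 0 s) (B + cball 0 s')"
  unfolding locally_close_def
proof (intro ballI impI)
  fix a assume a: "a \<in> A + cball 0 s" "norm a < R - s"
  then obtain x b where xb: "x \<in> A" "norm b \<le> s" "a = x + b"
    by (auto simp: set_plus_def)
  have "norm x \<le> norm a + norm b"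
    using norm_triangle_ineq4[of a b] xb(3) by simp
  with a xb obtain y where y: "y \<in> B" "dist x y \<le> \<delta>"
    using assms(1) unfolding locally_close_def by fastforce
  obtain b' where b': "b' \<in> cball 0 s'" "dist b b' \<le> max 0 (norm b - s')"
    using convex_inter_cball_near[OF convex_UNIV _ _ assms(2), of b] by auto
  have "dist (x + b) (y + b') \<le> dist x y + dist b b'"
    by (simp add: dist_norm norm_diff_triangle_ineq)
  with xb y b' show "\<exists>c\<in>B + cball 0 s'. dist a c \<le> \<delta> + \<bar>s - s'\<bar>"
    by (intro bexI[of _ "y + b'"]) auto
qed

lemma locally_close_inter_cball:
  fixes A B :: "'a::real_normed_vector set"
  assumes "locally_close R \<delta> A B" "convex B" "0 \<in> B" "0 \<le> r'"
  shows "locally_close R (2 * \<delta> + \<bar>r - r'\<bar>) (A \<inter> cball 0 r) (B \<inter> cball 0 r')"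
  unfolding locally_close_def
proof (intro ballI impI)
  fix a assume a: "a \<in> A \<inter> cball 0 r" "norm a < R"
  with assms(1) obtain y where y: "y \<in> B" "dist a y \<le> \<delta>"
    unfolding locally_close_def by blast
  obtain z where z: "z \<in> B \<inter> cball 0 r'" "dist y z \<le> max 0 (norm y - r')"
    using convex_inter_cball_near[OF assms(2,3) y(1) assms(4)] .
  have "norm y \<le> norm a + dist a y"
    by (metis dist_0_norm dist_commute dist_triangle)
  moreover have "norm a \<le> r" "0 \<le> dist a y"
    using a(1) by auto
  ultimately have "norm y - r' \<le> \<delta> + \<bar>r - r'\<bar>" "0 \<le> \<delta> + \<bar>r - r'\<bar>"
    using y(2) by linarith+
  then have "dist y z \<le> \<delta> + \<bar>r - r'\<bar>"
    using z(2) by linarith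
  then have "dist a z \<le> 2 * \<delta> + \<bar>r - r'\<bar>"
    using dist_triangle[of a z y] y by linarith
  with z show "\<exists>z\<in>B \<inter> cball 0 r'. dist a z \<le> 2 * \<delta> + \<bar>r - r'\<bar>"
    by blast
qed

lemma locally_close_psi:
  fixes A B :: "'a::euclidean_space set"
  assumes "locally_close R \<delta> A B" "convex B" "0 \<in> B" "0 < s" "0 < s'" "s' \<le> 1"
  shows "locally_close (R - s) (2 * (\<delta> + \<bar>s - s'\<bar>) + \<bar>(1 - s) / s - (1 - s') / s'\<bar>)
           (psi A s) (psi B s')"
proof -
  have "convex (B + cball 0 s')" "0 \<in> B + cball 0 s'"
    using assms(2,3,5) set_plus_intro[of 0 B 0 "cball 0 s'"] by (auto intro: convex_set_plus)
  then show ?thesis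
    using locally_close_inter_cball[OF locally_close_plus_cball[OF assms(1)]] assms(4-6)
    by (simp add: psi_eq)
qed

subsection \<open>Local closeness and the Attouch--Wets distance\<close>

lemma infdist_lessE:
  assumes "infdist x A < d" "A \<noteq> {}"
  obtains a where "a \<in> A" "dist x a < d"
  using assms that by (auto simp: infdist_notempty cINF_less_iff)

lemma dAW_commute: "dAW A B = dAW B A"
  by (simp add: dAW_def abs_minus_commute)

lemma dAW_le:
  fixes A B :: "'a::euclidean_space set"
  assumes "J \<ge> 1" "\<And>x. x \<in> ball 0 (real J) \<Longrightarrow> \<bar>infdist x A - infdist x B\<bar> \<le> \<epsilon>"
  shows "dAW A B \<le> max (1 / real J) \<epsilon>"
  unfolding dAW_def
proof (rule cSUP_least)
  fix j :: nat assume j: "j \<in> {1..}"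
  show "min (1 / real j) (SUP x\<in>ball 0 (real j). \<bar>infdist x A - infdist x B\<bar>) \<le> max (1 / real J) \<epsilon>"
  proof (cases "J \<le> j")
    case True
    then have "1 / real j \<le> 1 / real J"
      using assms(1) by (simp add: frac_le)
    then show ?thesis by linarith
  next
    case False
    have "(SUP x\<in>ball 0 (real j). \<bar>infdist x A - infdist x B\<bar>) \<le> \<epsilon>"
      using j False by (intro cSUP_least assms(2)) auto
    then show ?thesis by linarith
  qed
qed auto

lemma abs_infdist_diff_less_if_dAW_less:
  fixes A B :: "'a::euclidean_space set"
  assumes "0 \<in> A" "0 \<in> B" "j \<ge> 1" "dAW A B < d" "d \<le> 1 / real j" "norm x < real j"
  shows "\<bar>infdist x A - infdist x B\<bar> < d"
proof -
  let ?g = "\<lambda>j. SUP x\<in>ball 0 (real j). \<bar>infdist x A - infdist x B\<bar>"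
  have "\<bar>infdist y A - infdist y B\<bar> \<le> norm y" for y
    using infdist_le[OF assms(1), of y] infdist_le[OF assms(2), of y]
      infdist_nonneg[of y A] infdist_nonneg[of y B] by simp
  then have "bdd_above ((\<lambda>y. \<bar>infdist y A - infdist y B\<bar>) ` ball 0 (real j))"
    by (intro bdd_aboveI2[where M = "real j"]) (smt (verit) mem_ball_0)
  then have "\<bar>infdist x A - infdist x B\<bar> \<le> ?g j"
    using assms(6) by (intro cSUP_upper) auto
  moreover have "bdd_above ((\<lambda>j. min (1 / real j) (?g j)) ` {1..})"
    by (intro bdd_aboveI2[where M = 1]) (simp add: min.coboundedI1)
  then have "min (1 / real j) (?g j) \<le> dAW A B"
    unfolding dAW_def using assms(3) by (intro cSUP_upper) auto
  ultimately show ?thesis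
    using assms(4,5) by linarith
qed

lemma locally_close_if_dAW_less:
  fixes A B :: "'a::euclidean_space set"
  assumes "0 \<in> A" "0 \<in> B" "j \<ge> 1" "dAW A B < d" "d \<le> 1 / real j"
  shows "locally_close (real j) d A B"
  unfolding locally_close_def
proof (intro ballI impI)
  fix a assume "a \<in> A" "norm a < real j"
  then have "\<bar>infdist a A - infdist a B\<bar> < d"
    by (intro abs_infdist_diff_less_if_dAW_less[OF assms])
  then have "infdist a B < d"
    using \<open>a \<in> A\<close> by simp
  then obtain b where "b \<in> B" "dist a b < d"
    using assms(2) by (auto elim: infdist_lessE)
  then show "\<exists>b\<in>B. dist a b \<le> d"
    by force
qed

text \<open>Since 0 \<in> A, the points of A nearly nearest to x have norm below 2R + 1.\<close>
lemma infdist_le_if_locally_close: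
  fixes A B :: "'a::euclidean_space set"
  assumes "0 \<in> A" "locally_close (2 * R + 1) \<delta> A B" "norm x < R"
  shows "infdist x B \<le> infdist x A + \<delta>"
proof (rule field_le_epsilon)
  fix \<eta> :: real assume "0 < \<eta>"
  define \<eta>' where "\<eta>' = min \<eta> 1"
  have "0 < \<eta>'" "\<eta>' \<le> \<eta>" "\<eta>' \<le> 1"
    using \<open>0 < \<eta>\<close> by (auto simp: \<eta>'_def)
  then have "infdist x A < infdist x A + \<eta>'"
    by simp
  then obtain a where a: "a \<in> A" "dist x a < infdist x A + \<eta>'"
    using assms(1) by (blast elim: infdist_lessE)
  have "infdist x A \<le> norm x"
    using infdist_le[OF assms(1), of x] by simp
  moreover have "norm a \<le> norm x + dist x a"
    by (metis dist_0_norm dist_commute dist_triangle)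
  ultimately have "norm a < 2 * R + 1"
    using a \<open>\<eta>' \<le> 1\<close> assms(3) by linarith
  then obtain b where "b \<in> B" "dist a b \<le> \<delta>"
    using assms(2) a(1) unfolding locally_close_def by blast
  then have "infdist x B \<le> dist x a + \<delta>"
    using infdist_le[of b B x] dist_triangle[of x b a] by linarith
  then show "infdist x B \<le> infdist x A + \<delta> + \<eta>"
    using a \<open>\<eta>' \<le> \<eta>\<close> by linarith
qed

lemma dAW_le_if_locally_close:
  fixes A B :: "'a::euclidean_space set"
  assumes "0 \<in> A" "0 \<in> B" "J \<ge> 1"
    and "locally_close (2 * real J + 1) \<delta> A B" "locally_close (2 * real J + 1) \<delta> B A"
  shows "dAW A B \<le> max (1 / real J) \<delta>"
proof (rule dAW_le[OF assms(3)])
  fix x :: 'a assume "x \<in> ball 0 (real J)"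
  then have "norm x < real J" by simp
  then show "\<bar>infdist x A - infdist x B\<bar> \<le> \<delta>"
    using infdist_le_if_locally_close[OF assms(1,4)] infdist_le_if_locally_close[OF assms(2,5)]
    by fastforce
qed

subsection \<open>Continuity of \<open>\<psi>\<close>\<close>

lemma locally_close_psi_if_dAW_less:
  fixes A A' :: "'a::euclidean_space set"
  assumes "A \<in> K0" "A' \<in> K0" "j \<ge> 1" "dAW A A' < d" "d \<le> 1 / real j" "0 < t" "0 < t'" "t' \<le> 1"
  shows "locally_close (real j - t) (2 * (d + \<bar>t - t'\<bar>) + \<bar>(1 - t) / t - (1 - t') / t'\<bar>)
           (psi A t) (psi A' t')"
proof -
  have "0 \<in> A" "0 \<in> A'" "convex A'"
    using assms(1,2) by (auto simp: K0_def)
  then show ?thesis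
    using locally_close_psi[OF locally_close_if_dAW_less[OF _ _ assms(3-5)]] assms(6-8) by blast
qed

lemma psi_continuous_0:
  fixes A :: "'a::euclidean_space set"
  assumes A: "A \<in> K0" and e: "0 < e"
  shows "\<exists>d>0. \<forall>A'\<in>K0. \<forall>t'\<in>{0..1}. dAW A A' < d \<and> \<bar>0 - t'\<bar> < d \<longrightarrow>
           dAW (psi A 0) (psi A' t') < e"
proof -
  obtain J :: nat where "0 < J" "inverse (real J) < e"
    using ex_inverse_of_nat_less[OF e] by blast
  then have J: "J \<ge> 1" "1 / real J < e"
    by (auto simp: inverse_eq_divide)
  define j :: nat where "j = 2 * J + 2"
  define d where "d = min (e / 4) (1 / (real j + 2))"
  have d: "0 < d" "d \<le> e / 4" "d \<le> 1 / (real j + 2)"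
    using e by (auto simp: d_def)
  moreover have "1 / (real j + 2) \<le> 1 / real j" "1 / (real j + 2) \<le> 1"
    by (auto simp: j_def frac_le)
  ultimately have d_j: "d \<le> 1 / real j" "d \<le> 1"
    by linarith+
  show ?thesis
  proof (intro exI[of _ d] conjI ballI impI d(1))
    fix A' t' assume A': "A' \<in> K0" and t': "t' \<in> {0..1}" and "dAW A A' < d \<and> \<bar>0 - t'\<bar> < d"
    then have close: "dAW A A' < d" "dAW A' A < d" and "t' < d"
      by (auto simp: dAW_commute)
    have 0: "0 \<in> A" "0 \<in> A'" "0 \<in> psi A' t'"
      using A A' psi_in_K0[OF A' t'] by (auto simp: K0_def)
    have "locally_close (real j) d A (A' \<inter> cball 0 (real j + d))"
      using locally_close_inter_cball_large[OF locally_close_if_dAW_less[OF 0(1,2) _ close(1) d_j(1)]]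
      by (simp add: j_def)
    moreover have "A' \<inter> cball 0 (real j + d) \<subseteq> psi A' t'"
    proof -
      have "t' * (real j + 2) \<le> d * (real j + 2)"
        using \<open>t' < d\<close> by (intro mult_right_mono) auto
      moreover have "d * (real j + 2) \<le> 1"
        using d(3) by (simp add: le_divide_eq)
      ultimately have "t' * (real j + 2) \<le> 1"
        by linarith
      then have "t' * (real j + 1 + 1) \<le> 1"
        by (simp add: add.assoc)
      then have "A' \<inter> cball 0 (real j + 1) \<subseteq> psi A' t'"
        using t' by (intro inter_cball_subset_psi) auto
      moreover have "cball 0 (real j + d) \<subseteq> cball (0::'a) (real j + 1)"
        using d_j(2) by (intro subset_cball) simp
      ultimately show ?thesis by blast
    qed
    ultimately have "locally_close (2 * real J + 1) (e / 2) (psi A 0) (psi A' t')"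
      using d(1,2) by (auto simp: j_def elim!: locally_close_mono)
    moreover have "locally_close (real j - t') (d + \<bar>t' - 0\<bar>) (A' + cball 0 t') (A + cball 0 0)"
      using locally_close_plus_cball[OF locally_close_if_dAW_less[OF 0(2,1) _ close(2) d_j(1)],
          of 0 t']
      by (simp add: j_def)
    then have "locally_close (2 * real J + 1) (e / 2) (psi A' t') (psi A 0)"
      using t' \<open>t' < d\<close> d(2) psi_subset_plus_cball[of t' A']
      by (auto simp: j_def elim!: locally_close_mono)
    ultimately have "dAW (psi A 0) (psi A' t') \<le> max (1 / real J) (e / 2)"
      using 0 J(1) by (intro dAW_le_if_locally_close) auto
    then show "dAW (psi A 0) (psi A' t') < e"
      using J(2) e by linarith
  qed
qed

lemma psi_continuous_pos:
  fixes A :: "'a::euclidean_space set"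
  assumes A: "A \<in> K0" and t: "0 < t" "t \<le> 1" and e: "0 < e"
  shows "\<exists>d>0. \<forall>A'\<in>K0. \<forall>t'\<in>{0..1}. dAW A A' < d \<and> \<bar>t - t'\<bar> < d \<longrightarrow>
           dAW (psi A t) (psi A' t') < e"
proof -
  obtain J :: nat where "0 < J" "inverse (real J) < e"
    using ex_inverse_of_nat_less[OF e] by blast
  then have J: "J \<ge> 1" "1 / real J < e"
    by (auto simp: inverse_eq_divide)
  define r where "r s = (1 - s) / s" for s :: real
  have "isCont r t"
    using t unfolding r_def by (intro continuous_intros) auto
  moreover have "0 < e / 8"
    using e by simp
  ultimately obtain \<eta> where \<eta>: "0 < \<eta>" "\<forall>s. dist s t < \<eta> \<longrightarrow> dist (r s) (r t) < e / 8"
    unfolding continuous_at_eps_delta by blast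
  define j :: nat where "j = 2 * J + 2"
  define d where "d = min (min \<eta> t) (min (e / 16) (1 / real j))"
  have d: "0 < d" "d \<le> \<eta>" "d \<le> t" "d \<le> e / 16" "d \<le> 1 / real j"
    using \<eta> t e by (auto simp: d_def j_def)
  show ?thesis
  proof (intro exI[of _ d] conjI ballI impI d(1))
    fix A' t' assume A': "A' \<in> K0" and t': "t' \<in> {0..1}" and "dAW A A' < d \<and> \<bar>t - t'\<bar> < d"
    then have close: "dAW A A' < d" "dAW A' A < d" and "\<bar>t - t'\<bar> < d"
      by (auto simp: dAW_commute)
    then have "\<bar>t' - t\<bar> < \<eta>" "0 < t'"
      using d(2,3) by (auto simp: abs_minus_commute)
    then have "\<bar>r t' - r t\<bar> < e / 8"
      using \<eta>(2) by (simp add: dist_real_def)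
    then have "\<bar>r t - r t'\<bar> < e / 8"
      by (simp add: abs_minus_commute)
    have 0: "0 \<in> psi A t" "0 \<in> psi A' t'"
      using t psi_in_K0[OF A, of t] psi_in_K0[OF A' t'] by (auto simp: K0_def)
    have bound: "2 * (d + \<bar>t - t'\<bar>) + \<bar>r t - r t'\<bar> \<le> e / 2"
      using \<open>\<bar>t - t'\<bar> < d\<close> \<open>\<bar>r t - r t'\<bar> < e / 8\<close> d(1,4) by argo
    have "locally_close (real j - t) (2 * (d + \<bar>t - t'\<bar>) + \<bar>r t - r t'\<bar>) (psi A t) (psi A' t')"
      using locally_close_psi_if_dAW_less[OF A A' _ close(1) d(5)] t \<open>0 < t'\<close> t'
      by (simp add: j_def r_def)
    then have "locally_close (2 * real J + 1) (e / 2) (psi A t) (psi A' t')"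
      by (rule locally_close_mono) (use t bound in \<open>auto simp: j_def\<close>)
    moreover have "locally_close (real j - t') (2 * (d + \<bar>t' - t\<bar>) + \<bar>r t' - r t\<bar>) (psi A' t') (psi A t)"
      using locally_close_psi_if_dAW_less[OF A' A _ close(2) d(5)] t \<open>0 < t'\<close> t'
      by (simp add: j_def r_def)
    then have "locally_close (2 * real J + 1) (e / 2) (psi A' t') (psi A t)"
      by (rule locally_close_mono) (use t' bound in \<open>auto simp: j_def abs_minus_commute\<close>)
    ultimately have "dAW (psi A t) (psi A' t') \<le> max (1 / real J) (e / 2)"
      using 0 J(1) by (intro dAW_le_if_locally_close)
    then show "dAW (psi A t) (psi A' t') < e"
      using J(2) e by linarith
  qed
qed

lemma psi_continuous:
  fixes A :: "'a::euclidean_space set"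
  assumes "A \<in> K0" "t \<in> {0..1}" "0 < e"
  shows "\<exists>d>0. \<forall>A'\<in>K0. \<forall>t'\<in>{0..1}. dAW A A' < d \<and> \<bar>t - t'\<bar> < d \<longrightarrow>
           dAW (psi A t) (psi A' t') < e"
proof (cases "t = 0")
  case True
  then show ?thesis using psi_continuous_0[OF assms(1,3)] by simp
next
  case False
  then show ?thesis using psi_continuous_pos[OF assms(1) _ _ assms(3)] assms(2) by simp
qed

theorem lemma4p1:
  assumes "CARD('n) \<ge> 2"
  shows "(\<forall>A \<in> (K0 :: (real ^ 'n) set set). \<forall>t \<in> {0..1}. psi A t \<in> K0)
    \<and> (\<forall>A \<in> (K0 :: (real ^ 'n) set set). \<forall>t \<in> {0..1}. \<forall>e > 0. \<exists>d > 0.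
          \<forall>A' \<in> K0. \<forall>t' \<in> {0..1}. dAW A A' < d \<and> \<bar>t - t'\<bar> < d \<longrightarrow>
             dAW (psi A t) (psi A' t') < e)
    \<and> (\<forall>A \<in> (K0 :: (real ^ 'n) set set). \<forall>t.
          (sqrt 5 - 1) / 2 \<le> t \<and> t < 1 \<longrightarrow> psi A t = cball 0 ((1 - t) / t))"
  by (intro conjI ballI allI impI psi_in_K0 psi_continuous psi_eq_cball) (auto simp: K0_def)

end
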